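(* Let $N > n > m$ be positive integers and let $p(w) = c_N w^N + \sum_{k=m}^n c_k w^k + c_0$ be a polynomial with complex coefficients, where $c_0 \neq 0$ and $c_N \neq 0$. Define \[ R_1 := \max\left\{ 1, \frac{1}{|c_N|}\left(|c_0| + \sum_{k=m}^{n} |c_k|\right)\right\}, \qquad R_0 := \min\left\{ 1, \frac{|c_0|}{|c_N| + \sum_{k=m}^n |c_k|}\right\}. \] Then every root $w \in \mathbb{C}$ of $p$ satisfies $R_0^{1/m} \leq |w| \leq R_1^{1/(N-n)}$. *)

theory Defs
  imports Complex_Main
begin

end

theory Submission
  imports Defs
begin

text \<open>If \<open>|w| \<le> 1\<close>, every monomial of degree at least \<open>m\<close> has norm at most
  \<open>|c\<^sub>k| |w|^m\<close>, so solving the root equation for the constant term gives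
  \<open>|c\<^sub>0| \<le> (|c\<^sub>N| + \<Sum> |c\<^sub>k|) |w|^m\<close>. Dually, if \<open>|w| \<ge> 1\<close>, every term of degree at most \<open>n\<close>,
  the constant term included, has norm at most \<open>|c\<^sub>k| |w|^n\<close>, and solving for the leading term
  gives \<open>|c\<^sub>N| |w|^(N-n) \<le> |c\<^sub>0| + \<Sum> |c\<^sub>k|\<close>. Both bounds hold for an arbitrary set of
  exponents, into which the theorem folds \<open>c\<^sub>N w^N\<close>, resp. \<open>c\<^sub>0\<close>.\<close>

lemma norm_sum_monomials_le_min_degree:
  fixes c :: "nat \<Rightarrow> 'a::real_normed_field"
  assumes "\<forall>k\<in>K. m \<le> k" and "norm w \<le> 1"
  shows "norm (\<Sum>k\<in>K. c k * w ^ k) \<le> (\<Sum>k\<in>K. norm (c k)) * norm w ^ m"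
  unfolding sum_distrib_right
proof (rule sum_norm_le)
  fix k assume "k \<in> K"
  then have "norm w ^ k \<le> norm w ^ m"
    using assms by (intro power_decreasing) auto
  then show "norm (c k * w ^ k) \<le> norm (c k) * norm w ^ m"
    by (simp add: norm_mult norm_power mult_left_mono)
qed

lemma norm_sum_monomials_le_max_degree:
  fixes c :: "nat \<Rightarrow> 'a::real_normed_field"
  assumes "\<forall>k\<in>K. k \<le> n" and "1 \<le> norm w"
  shows "norm (\<Sum>k\<in>K. c k * w ^ k) \<le> (\<Sum>k\<in>K. norm (c k)) * norm w ^ n"
  unfolding sum_distrib_right
proof (rule sum_norm_le)
  fix k assume "k \<in> K"
  then have "norm w ^ k \<le> norm w ^ n"
    using assms by (intro power_increasing) auto
  then show "norm (c k * w ^ k) \<le> norm (c k) * norm w ^ n"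
    by (simp add: norm_mult norm_power mult_left_mono)
qed

lemma powr_inverse_le_of_le_power:
  fixes x r :: real
  assumes "0 \<le> x" "x \<le> r ^ k" "0 \<le> r" "0 < k"
  shows "x powr (1 / real k) \<le> r"
proof -
  have "x powr (1 / real k) = root k x"
    using assms by (simp add: root_powr_inverse)
  also have "\<dots> \<le> root k (r ^ k)"
    using assms by simp
  also have "\<dots> = r"
    using assms by (simp add: real_root_power_cancel)
  finally show ?thesis .
qed

lemma le_powr_inverse_of_power_le:
  fixes x r :: real
  assumes "r ^ k \<le> x" "0 \<le> r" "0 < k"
  shows "r \<le> x powr (1 / real k)"
proof -
  have "r = root k (r ^ k)"
    using assms by (simp add: real_root_power_cancel)
  also have "\<dots> \<le> root k x"
    using assms by simp
  also have "\<dots> = x powr (1 / real k)"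
    using assms by (simp add: root_powr_inverse order_trans[OF zero_le_power])
  finally show ?thesis .
qed

lemma lacunary_root_norm_lower_bound:
  fixes c :: "nat \<Rightarrow> 'a::real_normed_field"
  assumes root: "c 0 + (\<Sum>k\<in>K. c k * w ^ k) = 0"
    and degrees: "\<forall>k\<in>K. m \<le> k" and "0 < m"
  shows "min 1 (norm (c 0) / (\<Sum>k\<in>K. norm (c k))) powr (1 / real m) \<le> norm w"
proof (cases "norm w \<le> 1")
  case True
  define T where "T = (\<Sum>k\<in>K. norm (c k))"
  have "0 \<le> T"
    unfolding T_def by (simp add: sum_nonneg)
  have "c 0 = - (\<Sum>k\<in>K. c k * w ^ k)"
    using root by (simp add: eq_neg_iff_add_eq_0)
  then have "norm (c 0) = norm (\<Sum>k\<in>K. c k * w ^ k)"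
    by simp
  also have "\<dots> \<le> T * norm w ^ m"
    unfolding T_def using degrees True by (rule norm_sum_monomials_le_min_degree)
  finally have "norm (c 0) / T \<le> norm w ^ m"
    using \<open>0 \<le> T\<close> by (cases "T = 0") (auto simp: pos_divide_le_eq mult.commute)
  then show ?thesis
    using \<open>0 < m\<close> \<open>0 \<le> T\<close> by (intro powr_inverse_le_of_le_power) (auto simp: T_def)
next
  case False
  have "min 1 (norm (c 0) / (\<Sum>k\<in>K. norm (c k))) powr (1 / real m) \<le> 1 powr (1 / real m)"
    by (intro powr_mono2) (auto simp: sum_nonneg)
  with False show ?thesis by simp
qed

lemma lacunary_root_norm_upper_bound:
  fixes c :: "nat \<Rightarrow> 'a::real_normed_field"
  assumes root: "c N * w ^ N + (\<Sum>k\<in>K. c k * w ^ k) = 0"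
    and degrees: "\<forall>k\<in>K. k \<le> n" and "n < N" and "c N \<noteq> 0"
  shows "norm w \<le> max 1 ((\<Sum>k\<in>K. norm (c k)) / norm (c N)) powr (1 / real (N - n))"
proof (cases "1 \<le> norm w")
  case True
  define T where "T = (\<Sum>k\<in>K. norm (c k))"
  have leading: "c N * w ^ N = - (\<Sum>k\<in>K. c k * w ^ k)"
    using root by (simp add: eq_neg_iff_add_eq_0)
  have "norm (c N) * norm w ^ (N - n) * norm w ^ n = norm (c N * w ^ N)"
    using \<open>n < N\<close> by (simp add: norm_mult norm_power mult.assoc flip: power_add)
  also have "\<dots> = norm (\<Sum>k\<in>K. c k * w ^ k)"
    unfolding leading by simp
  also have "\<dots> \<le> T * norm w ^ n"
    unfolding T_def using degrees True by (rule norm_sum_monomials_le_max_degree)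
  finally have "norm (c N) * norm w ^ (N - n) * norm w ^ n \<le> T * norm w ^ n" .
  moreover have "0 < norm w ^ n"
    using True by (intro zero_less_power) linarith
  ultimately have "norm (c N) * norm w ^ (N - n) \<le> T"
    by simp
  then have "norm w ^ (N - n) \<le> T / norm (c N)"
    using \<open>c N \<noteq> 0\<close> by (simp add: le_divide_eq mult.commute)
  then show ?thesis
    using \<open>n < N\<close> by (intro le_powr_inverse_of_power_le) (auto simp: T_def)
next
  case False
  have "1 powr (1 / real (N - n)) \<le> max 1 ((\<Sum>k\<in>K. norm (c k)) / norm (c N)) powr (1 / real (N - n))"
    by (intro powr_mono2) auto
  with False show ?thesis by simp
qed

theorem proposition2p1:
  fixes N n m :: nat and c :: "nat \<Rightarrow> complex" and w :: complex
  assumes "0 < m" and "m < n" and "n < N"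
    and "c 0 \<noteq> 0" and "c N \<noteq> 0"
    and root: "c N * w ^ N + (\<Sum>k=m..n. c k * w ^ k) + c 0 = 0"
  defines "R1 \<equiv> max 1 ((cmod (c 0) + (\<Sum>k=m..n. cmod (c k))) / cmod (c N))"
    and "R0 \<equiv> min 1 (cmod (c 0) / (cmod (c N) + (\<Sum>k=m..n. cmod (c k))))"
  shows "R0 powr (1 / real m) \<le> cmod w \<and> cmod w \<le> R1 powr (1 / real (N - n))"
proof
  have "N \<notin> {m..n}" and "0 \<notin> {m..n}"
    using \<open>0 < m\<close> \<open>n < N\<close> by auto
  have "c 0 + (\<Sum>k\<in>insert N {m..n}. c k * w ^ k) = 0"
    using root \<open>N \<notin> {m..n}\<close> by (simp add: algebra_simps)
  from lacunary_root_norm_lower_bound[OF this _ \<open>0 < m\<close>]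
  show "R0 powr (1 / real m) \<le> cmod w"
    using \<open>N \<notin> {m..n}\<close> \<open>m < n\<close> \<open>n < N\<close> by (simp add: R0_def)
  have "c N * w ^ N + (\<Sum>k\<in>insert 0 {m..n}. c k * w ^ k) = 0"
    using root \<open>0 \<notin> {m..n}\<close> by (simp add: algebra_simps)
  from lacunary_root_norm_upper_bound[OF this _ \<open>n < N\<close> \<open>c N \<noteq> 0\<close>]
  show "cmod w \<le> R1 powr (1 / real (N - n))"
    using \<open>0 \<notin> {m..n}\<close> by (simp add: R1_def)
qed

end
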